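(* Let $(W,S)$ be a Coxeter system whose Davis complex $\Sigma(W,S)$ is two-dimensional, and suppose that for every $t\in S$ the (unweighted, $\mathbf{q}=\mathbf{1}$) reduced $L^2$-homology $L^2_\mathbf{1}H_i(\Omega(S,\{t\}),\partial\Omega(S,\{t\}))$ vanishes for all $i\neq 1$. Then $L^2_\mathbf{q}H_2(\Sigma(W,S))=0$ for every multiparameter $\mathbf{q}\le\mathbf{1}$ (i.e. $q_s\le 1$ for all $s\in S$).
   Context: A Coxeter system $(W,S)$; $U\subseteq S$ is spherical if $\langle U\rangle$ is finite. A multiparameter is $\mathbf{q}=(q_s)_{s\in S}$, $q_s>0$, constant on conjugacy classes; $\mathbf{1}$ is the all-ones multiparameter. The Coxeter cellulation of the Davis complex has cells $wc_U$ ($w\in W$, $U$ spherical) of dimension $|U|$. The $(S,T)$-ruin for spherical $T$: $\Omega(S,T)$ is the union of closed Coxeter cells of type $T'\supseteq T$ ($T'$ spherical), and $\partial\Omega(S,T)$ consists of the cells of $\Omega(S,T)$ whose type does not contain $T$. Weighted $L^2$-homology: cell $w\sigma$ gets measure $q_u$, $u$ the shortest element of $wW_{S(\sigma)}$; chains are square-summable for $\sum f(\sigma)g(\sigma)\mu_\mathbf{q}(\sigma)$; $\partial^\mathbf{q}$ is the adjoint of the coboundary; reduced homology $\ker\partial^\mathbf{q}/\overline{\operatorname{im}\partial^\mathbf{q}}$ (relative version for pairs). *)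

theory Defs
  imports "HOL-Algebra.Multiplicative_Group" "HOL-Algebra.Generated_Groups"
          "HOL-Analysis.Infinite_Sum"
begin

definition wprod :: "('a, 'b) monoid_scheme \<Rightarrow> 'a list \<Rightarrow> 'a" where
  "wprod G xs = foldr (\<lambda>x y. x \<otimes>\<^bsub>G\<^esub> y) xs \<one>\<^bsub>G\<^esub>"

text \<open>Coxeter relators: the words (s t)^m(s,t) with m(s,t) the (finite) order of s t;
  for s = t this is the word s s.\<close>
definition cox_relator :: "('a, 'b) monoid_scheme \<Rightarrow> 'a set \<Rightarrow> 'a list \<Rightarrow> bool" where
  "cox_relator G S r \<longleftrightarrow> (\<exists>s\<in>S. \<exists>t\<in>S. group.ord G (s \<otimes>\<^bsub>G\<^esub> t) > 0 \<and>
       r = concat (replicate (group.ord G (s \<otimes>\<^bsub>G\<^esub> t)) [s, t]))"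

definition cox_step :: "('a, 'b) monoid_scheme \<Rightarrow> 'a set \<Rightarrow> 'a list \<Rightarrow> 'a list \<Rightarrow> bool" where
  "cox_step G S x y \<longleftrightarrow> (\<exists>u v r. cox_relator G S r \<and> x = u @ r @ v \<and> y = u @ v)"

text \<open>(G,S) is a Coxeter system: S is a finite set of involutions generating G, and G is
  presented by S subject to the Coxeter relations (s t)^m(s,t) = 1 (m(s,t) finite): every
  word over S representing 1 can be reduced to the empty word by inserting/deleting relators.\<close>
definition coxeter_system :: "('a, 'b) monoid_scheme \<Rightarrow> 'a set \<Rightarrow> bool" where
  "coxeter_system G S \<longleftrightarrow> group G \<and> finite S \<and> S \<subseteq> carrier G \<and> \<one>\<^bsub>G\<^esub> \<notin> S \<and>
     (\<forall>s\<in>S. s \<otimes>\<^bsub>G\<^esub> s = \<one>\<^bsub>G\<^esub>) \<and> generate G S = carrier G \<and>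
     (\<forall>xs \<in> lists S. wprod G xs = \<one>\<^bsub>G\<^esub> \<longrightarrow> equivclp (cox_step G S) xs [])"

definition spherical :: "('a, 'b) monoid_scheme \<Rightarrow> 'a set \<Rightarrow> bool" where
  "spherical G U \<longleftrightarrow> finite (generate G U)"

text \<open>Dimension of the Davis complex = max cardinality of a spherical subset.\<close>
definition davis_dim_two :: "('a, 'b) monoid_scheme \<Rightarrow> 'a set \<Rightarrow> bool" where
  "davis_dim_two G S \<longleftrightarrow> (\<exists>U\<subseteq>S. spherical G U \<and> card U = 2) \<and>
     (\<forall>U\<subseteq>S. spherical G U \<longrightarrow> card U \<le> 2)"

definition wlen :: "('a, 'b) monoid_scheme \<Rightarrow> 'a set \<Rightarrow> 'a \<Rightarrow> nat" where
  "wlen G S w = (LEAST n. \<exists>xs\<in>lists S. length xs = n \<and> wprod G xs = w)"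

text \<open>Shortest element of a coset (unique for cosets of special subgroups).\<close>
definition cmin :: "('a, 'b) monoid_scheme \<Rightarrow> 'a set \<Rightarrow> 'a set \<Rightarrow> 'a" where
  "cmin G S A = (SOME a. a \<in> A \<and> (\<forall>b\<in>A. wlen G S a \<le> wlen G S b))"

definition multiparameter :: "('a, 'b) monoid_scheme \<Rightarrow> 'a set \<Rightarrow> ('a \<Rightarrow> real) \<Rightarrow> bool" where
  "multiparameter G S q \<longleftrightarrow> (\<forall>s\<in>S. q s > 0) \<and>
     (\<forall>s\<in>S. \<forall>t\<in>S. (\<exists>w\<in>carrier G. t = w \<otimes>\<^bsub>G\<^esub> s \<otimes>\<^bsub>G\<^esub> inv\<^bsub>G\<^esub> w) \<longrightarrow> q s = q t)"

definition qpow :: "('a, 'b) monoid_scheme \<Rightarrow> 'a set \<Rightarrow> ('a \<Rightarrow> real) \<Rightarrow> 'a \<Rightarrow> real" where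
  "qpow G S q w = (SOME r. \<exists>xs\<in>lists S. length xs = wlen G S w \<and> wprod G xs = w \<and>
                              r = prod_list (map q xs))"

text \<open>A cell w c_U is represented by the pair (w W_U, U); its dimension is card U.\<close>
type_synonym 'a cell = "'a set \<times> 'a set"

definition cox_cells :: "('a, 'b) monoid_scheme \<Rightarrow> 'a set \<Rightarrow> nat \<Rightarrow> 'a cell set" where
  "cox_cells G S i = {(w <#\<^bsub>G\<^esub> generate G U, U) | w U.
       w \<in> carrier G \<and> U \<subseteq> S \<and> spherical G U \<and> card U = i}"

text \<open>A fixed linear order on S (any injection into nat), used to orient the cells.\<close>
definition sorder :: "'a set \<Rightarrow> 'a \<Rightarrow> nat" where
  "sorder S = (SOME r. inj_on r S)"

definition spos :: "'a set \<Rightarrow> 'a set \<Rightarrow> 'a \<Rightarrow> nat" where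
  "spos S U s = card {t\<in>U. sorder S t < sorder S s}"

text \<open>Incidence numbers of the cellular chain complex (Davis):
  d(w c_T) = sum_{s in T} (-1)^{pos(s)} sum_{u in W_T^{T-s}} (-1)^{l(u)} w u c_{T-s},
  with w the shortest element of w W_T (so that l(wu) = l(w) + l(u)).\<close>
definition cox_inc :: "('a, 'b) monoid_scheme \<Rightarrow> 'a set \<Rightarrow> 'a cell \<Rightarrow> 'a cell \<Rightarrow> real" where
  "cox_inc G S \<tau> \<sigma> =
     (if (\<exists>s\<in>snd \<tau>. snd \<sigma> = snd \<tau> - {s}) \<and> fst \<sigma> \<subseteq> fst \<tau>
      then (-1) ^ (spos S (snd \<tau>) (THE s. s \<in> snd \<tau> \<and> snd \<sigma> = snd \<tau> - {s})
                   + wlen G S (cmin G S (fst \<sigma>)) + wlen G S (cmin G S (fst \<tau>)))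
      else 0)"

definition cell_meas :: "('a, 'b) monoid_scheme \<Rightarrow> 'a set \<Rightarrow> ('a \<Rightarrow> real) \<Rightarrow> 'a cell \<Rightarrow> real" where
  "cell_meas G S q \<sigma> = qpow G S q (cmin G S (fst \<sigma>))"

text \<open>C i: cells of dimension i counted in the (relative) chain complex; \<mu>: measure;
  inc: incidence numbers.\<close>
definition l2chains :: "(nat \<Rightarrow> 'c set) \<Rightarrow> ('c \<Rightarrow> real) \<Rightarrow> nat \<Rightarrow> ('c \<Rightarrow> real) set" where
  "l2chains C \<mu> i = {f. (\<forall>\<sigma>. \<sigma> \<notin> C i \<longrightarrow> f \<sigma> = 0) \<and>
                        (\<lambda>\<sigma>. (f \<sigma>)\<^sup>2 * \<mu> \<sigma>) summable_on C i}"

definition l2normsq :: "(nat \<Rightarrow> 'c set) \<Rightarrow> ('c \<Rightarrow> real) \<Rightarrow> nat \<Rightarrow> ('c \<Rightarrow> real) \<Rightarrow> real" where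
  "l2normsq C \<mu> i f = (\<Sum>\<^sub>\<infinity>\<sigma>\<in>C i. (f \<sigma>)\<^sup>2 * \<mu> \<sigma>)"

text \<open>The weighted boundary \<partial>^q: adjoint of the coboundary
  (\<delta>f)(\<tau>) = \<Sum>_\<sigma> [\<tau>:\<sigma>] f(\<sigma>) w.r.t. the weighted inner products.\<close>
definition wbd :: "(nat \<Rightarrow> 'c set) \<Rightarrow> ('c \<Rightarrow> real) \<Rightarrow> ('c \<Rightarrow> 'c \<Rightarrow> real) \<Rightarrow> nat
                    \<Rightarrow> ('c \<Rightarrow> real) \<Rightarrow> 'c \<Rightarrow> real" where
  "wbd C \<mu> inc i g \<sigma> =
     (if i = 0 \<or> \<sigma> \<notin> C (i - 1) then 0
      else (1 / \<mu> \<sigma>) * (\<Sum>\<tau>\<in>{\<tau>\<in>C i. inc \<tau> \<sigma> \<noteq> 0}. inc \<tau> \<sigma> * g \<tau> * \<mu> \<tau>))"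

text \<open>Reduced L^2 homology ker \<partial>_i / closure(im \<partial>_{i+1}) vanishes.\<close>
definition red_l2_hom_vanishes ::
    "(nat \<Rightarrow> 'c set) \<Rightarrow> ('c \<Rightarrow> real) \<Rightarrow> ('c \<Rightarrow> 'c \<Rightarrow> real) \<Rightarrow> nat \<Rightarrow> bool" where
  "red_l2_hom_vanishes C \<mu> inc i \<longleftrightarrow>
     (\<forall>f\<in>l2chains C \<mu> i. (\<forall>\<sigma>. wbd C \<mu> inc i f \<sigma> = 0) \<longrightarrow>
        (\<forall>\<epsilon>>0. \<exists>g\<in>l2chains C \<mu> (Suc i).
            l2normsq C \<mu> i (\<lambda>\<sigma>. f \<sigma> - wbd C \<mu> inc (Suc i) g \<sigma>) < \<epsilon>))"

definition davis_l2H_zero :: "('a, 'b) monoid_scheme \<Rightarrow> 'a set \<Rightarrow> ('a \<Rightarrow> real) \<Rightarrow> nat \<Rightarrow> bool" where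
  "davis_l2H_zero G S q i = red_l2_hom_vanishes (cox_cells G S) (cell_meas G S q) (cox_inc G S) i"

text \<open>Relative cells of the pair (\<Omega>(S,T), \<partial>\<Omega>(S,T)): cells of \<Omega>(S,T) not in \<partial>\<Omega>(S,T),
  i.e. cells whose (spherical) type contains T.\<close>
definition ruin_rel_cells :: "('a, 'b) monoid_scheme \<Rightarrow> 'a set \<Rightarrow> 'a set \<Rightarrow> nat \<Rightarrow> 'a cell set" where
  "ruin_rel_cells G S T i = {\<sigma>\<in>cox_cells G S i. T \<subseteq> snd \<sigma>}"

definition ruin_l2H_zero :: "('a, 'b) monoid_scheme \<Rightarrow> 'a set \<Rightarrow> 'a set \<Rightarrow> ('a \<Rightarrow> real) \<Rightarrow> nat \<Rightarrow> bool" where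
  "ruin_l2H_zero G S T q i = red_l2_hom_vanishes (ruin_rel_cells G S T) (cell_meas G S q) (cox_inc G S) i"

end

theory Submission
  imports Defs
begin

text \<open>Since the Davis complex has no 3-cells, reduced L^2 homology in degree 2 is just the
  space of weighted 2-cycles, so it suffices to show that every q-weighted 2-cycle f vanishes.
  Every 2-cell \<tau> contains some t in its type, i.e. lies in the relative complex of the ruin
  (\<Omega>(S,{t}), \<partial>\<Omega>(S,{t})). This relative complex is closed under cofaces, so the rescaled
  restriction f\<mu>_q of f is an unweighted relative 2-cycle, and it is square summable because
  \<mu>_q \<le> 1 when q \<le> 1. The relative complex has no 3-cells either, so the vanishing of its
  unweighted reduced H_2 forces f\<mu>_q = 0, hence f(\<tau>) = 0.\<close>

lemma coxeter_systemD:
  assumes "coxeter_system G S"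
  shows "group G" "S \<subseteq> carrier G" "generate G S = carrier G" "\<forall>s\<in>S. s \<otimes>\<^bsub>G\<^esub> s = \<one>\<^bsub>G\<^esub>"
  using assms unfolding coxeter_system_def by blast+

lemma wprod_closed:
  assumes "group G" "set xs \<subseteq> carrier G"
  shows "wprod G xs \<in> carrier G"
  using assms(2) by (induction xs) (simp_all add: wprod_def group.is_monoid[OF assms(1)] monoid.m_closed)

lemma wprod_append:
  assumes G: "group G" and "set xs \<subseteq> carrier G" "set ys \<subseteq> carrier G"
  shows "wprod G (xs @ ys) = wprod G xs \<otimes>\<^bsub>G\<^esub> wprod G ys"
  using assms(2)
proof (induction xs)
  case Nil
  then show ?case
    using wprod_closed[OF G assms(3)] by (simp add: wprod_def group.is_monoid[OF G] monoid.l_one)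
next
  case (Cons a xs)
  then show ?case
    using wprod_closed[OF G] assms(3)
    by (simp add: wprod_def group.is_monoid[OF G] monoid.m_assoc)
qed

lemma coxeter_generate_eq_wprod:
  assumes cs: "coxeter_system G S" and x: "x \<in> generate G S"
  shows "\<exists>xs\<in>lists S. wprod G xs = x"
  using x
proof (induction rule: generate.induct)
  case one
  show ?case by (intro bexI[of _ "[]"]) (auto simp: wprod_def)
next
  case (incl s)
  have "group G" "s \<in> carrier G" using incl coxeter_systemD[OF cs] by auto
  with incl show ?case
    by (intro bexI[of _ "[s]"]) (auto simp: wprod_def group.is_monoid monoid.r_one)
next
  case (inv s)
  have G: "group G" and s: "s \<in> carrier G" "s \<otimes>\<^bsub>G\<^esub> s = \<one>\<^bsub>G\<^esub>"
    using inv coxeter_systemD[OF cs] by auto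
  then have "inv\<^bsub>G\<^esub> s = s" by (metis group.inv_equality)
  with G s inv show ?case
    by (intro bexI[of _ "[s]"]) (auto simp: wprod_def group.is_monoid monoid.r_one)
next
  case (eng x y)
  then obtain xs ys where "xs \<in> lists S" "wprod G xs = x" "ys \<in> lists S" "wprod G ys = y"
    by blast
  moreover note coxeter_systemD(1,2)[OF cs]
  ultimately show ?case
    by (intro bexI[of _ "xs @ ys"]) (auto simp: wprod_append[of G xs ys] subset_iff)
qed

lemma coxeter_reduced_word:
  assumes cs: "coxeter_system G S" and x: "x \<in> carrier G"
  obtains xs where "xs \<in> lists S" "length xs = wlen G S x" "wprod G xs = x"
proof -
  have "x \<in> generate G S" using coxeter_systemD(3)[OF cs] x by simp
  then have "\<exists>n. \<exists>xs\<in>lists S. length xs = n \<and> wprod G xs = x"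
    using coxeter_generate_eq_wprod[OF cs] by blast
  then have "\<exists>xs\<in>lists S. length xs = wlen G S x \<and> wprod G xs = x"
    unfolding wlen_def by (rule LeastI_ex)
  with that show ?thesis by blast
qed

lemma qpow_eq_prod_list:
  assumes cs: "coxeter_system G S" and x: "x \<in> carrier G"
  obtains xs where "xs \<in> lists S" "qpow G S q x = prod_list (map q xs)"
proof -
  obtain ys where "ys \<in> lists S" "length ys = wlen G S x" "wprod G ys = x"
    using coxeter_reduced_word[OF cs x] .
  then have "\<exists>r. \<exists>xs\<in>lists S. length xs = wlen G S x \<and> wprod G xs = x \<and> r = prod_list (map q xs)"
    by blast
  then have "\<exists>xs\<in>lists S. length xs = wlen G S x \<and> wprod G xs = x \<and> qpow G S q x = prod_list (map q xs)"
    unfolding qpow_def by (rule someI_ex)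
  with that show ?thesis by blast
qed

lemma cmin_mem:
  assumes "a \<in> A"
  shows "cmin G S A \<in> A"
proof -
  have "\<exists>a. a \<in> A \<and> (\<forall>b\<in>A. wlen G S a \<le> wlen G S b)"
    using assms by (intro exI[of _ "arg_min (wlen G S) (\<lambda>x. x \<in> A)"])
      (auto intro: arg_min_natI arg_min_nat_le)
  from someI_ex[OF this] show ?thesis unfolding cmin_def by blast
qed

lemma cmin_cox_cell_in_carrier:
  assumes cs: "coxeter_system G S" and \<sigma>: "\<sigma> \<in> cox_cells G S i"
  shows "cmin G S (fst \<sigma>) \<in> carrier G"
proof -
  obtain w U where \<sigma>_eq: "\<sigma> = (w <#\<^bsub>G\<^esub> generate G U, U)" and w: "w \<in> carrier G" and "U \<subseteq> S"
    using \<sigma> unfolding cox_cells_def by blast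
  have G: "group G" and "U \<subseteq> carrier G"
    using coxeter_systemD(1,2)[OF cs] \<open>U \<subseteq> S\<close> by auto
  then have H: "generate G U \<subseteq> carrier G"
    using group.generate_is_subgroup[OF G] subgroup.subset by blast
  have "w \<in> w <#\<^bsub>G\<^esub> generate G U"
    unfolding l_coset_def using w G generate.one
    by (force simp: group.is_monoid monoid.r_one)
  then have "cmin G S (fst \<sigma>) \<in> w <#\<^bsub>G\<^esub> generate G U"
    using cmin_mem \<sigma>_eq by fastforce
  with group.l_coset_subset_G[OF G H w] show ?thesis by blast
qed

lemma prod_list_map_bounds:
  assumes "\<forall>x\<in>set xs. 0 < f x \<and> f x \<le> (1::real)"
  shows "0 < prod_list (map f xs) \<and> prod_list (map f xs) \<le> 1"
  using assms
proof (induction xs)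
  case (Cons x xs)
  then have "0 < f x" "f x \<le> 1" "0 < prod_list (map f xs)" "prod_list (map f xs) \<le> 1" by auto
  then show ?case by (simp add: mult_le_one)
qed simp

lemma cell_meas_bounds:
  assumes cs: "coxeter_system G S" and \<sigma>: "\<sigma> \<in> cox_cells G S i"
    and q: "\<forall>s\<in>S. 0 < q s \<and> q s \<le> 1"
  shows "0 < cell_meas G S q \<sigma> \<and> cell_meas G S q \<sigma> \<le> 1"
proof -
  obtain xs where xs: "xs \<in> lists S" "qpow G S q (cmin G S (fst \<sigma>)) = prod_list (map q xs)"
    by (rule qpow_eq_prod_list[OF cs cmin_cox_cell_in_carrier[OF cs \<sigma>]])
  have "\<forall>s\<in>set xs. 0 < q s \<and> q s \<le> 1" using xs(1) q by blast
  then show ?thesis unfolding cell_meas_def xs(2) by (rule prod_list_map_bounds)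
qed

lemma cell_meas_one:
  assumes cs: "coxeter_system G S" and \<sigma>: "\<sigma> \<in> cox_cells G S i"
  shows "cell_meas G S (\<lambda>_. 1) \<sigma> = 1"
proof -
  obtain xs where "xs \<in> lists S"
    and xs: "qpow G S (\<lambda>_. 1) (cmin G S (fst \<sigma>)) = prod_list (map (\<lambda>_. 1::real) xs)"
    by (rule qpow_eq_prod_list[OF cs cmin_cox_cell_in_carrier[OF cs \<sigma>]])
  have "prod_list (map (\<lambda>_. 1::real) xs) = 1" by (induction xs) simp_all
  with xs show ?thesis unfolding cell_meas_def by simp
qed

lemma wbd_eq_zero_if_no_cells:
  assumes "C i = {}"
  shows "wbd C \<mu> inc i g \<sigma> = 0"
  using assms by (simp add: wbd_def)

lemma red_l2_hom_vanishes_if_cycles_zero: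
  assumes "\<And>f. f \<in> l2chains C \<mu> i \<Longrightarrow> (\<forall>\<sigma>. wbd C \<mu> inc i f \<sigma> = 0) \<Longrightarrow> \<forall>\<sigma>\<in>C i. f \<sigma> = 0"
  shows "red_l2_hom_vanishes C \<mu> inc i"
  unfolding red_l2_hom_vanishes_def
proof (intro ballI impI allI)
  fix f and \<epsilon> :: real
  assume f: "f \<in> l2chains C \<mu> i" "\<forall>\<sigma>. wbd C \<mu> inc i f \<sigma> = 0" and "\<epsilon> > 0"
  have "(\<lambda>_. 0) \<in> l2chains C \<mu> (Suc i)" by (simp add: l2chains_def)
  moreover have "l2normsq C \<mu> i (\<lambda>\<sigma>. f \<sigma> - wbd C \<mu> inc (Suc i) (\<lambda>_. 0) \<sigma>) = 0"
    unfolding l2normsq_def using assms[OF f] by (intro infsum_0) (simp add: wbd_def)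
  ultimately show "\<exists>g\<in>l2chains C \<mu> (Suc i).
      l2normsq C \<mu> i (\<lambda>\<sigma>. f \<sigma> - wbd C \<mu> inc (Suc i) g \<sigma>) < \<epsilon>"
    using \<open>\<epsilon> > 0\<close> by (intro bexI) auto
qed

text \<open>With no (i+1)-cells the boundaries are zero, so "f is approximable by boundaries"
  means that its norm is arbitrarily small.\<close>
lemma red_l2_hom_vanishes_top_cycle_eq_zero:
  assumes van: "red_l2_hom_vanishes C \<mu> inc i" and top: "C (Suc i) = {}"
    and \<mu>: "\<forall>\<sigma>\<in>C i. 0 < \<mu> \<sigma>"
    and f: "f \<in> l2chains C \<mu> i" "\<forall>\<sigma>. wbd C \<mu> inc i f \<sigma> = 0"
    and \<tau>: "\<tau> \<in> C i"
  shows "f \<tau> = 0"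
proof -
  have small: "l2normsq C \<mu> i f < \<epsilon>" if "\<epsilon> > 0" for \<epsilon>
    using van f that wbd_eq_zero_if_no_cells[where C = C, OF top]
    unfolding red_l2_hom_vanishes_def by fastforce
  have "l2normsq C \<mu> i f \<le> 0"
    using small[of "l2normsq C \<mu> i f"] by linarith
  then have "(f \<tau>)\<^sup>2 * \<mu> \<tau> = 0"
    using f(1) \<mu> \<tau> unfolding l2normsq_def l2chains_def
    by (intro nonneg_infsum_le_0D[where A = "C i"]) auto
  with \<mu> \<tau> show ?thesis by fastforce
qed

text \<open>Multiplying by \<mu> turns \<mu>-weighted chains into chains for a weight \<nu> that is 1 on R;
  \<mu> \<le> 1 keeps them square summable, and closure of R under cofaces keeps cycles cycles.\<close>
lemma l2chains_rescaled_restriction: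
  assumes RC: "R i \<subseteq> C i" and \<nu>: "\<forall>\<tau>\<in>R i. \<nu> \<tau> = 1"
    and \<mu>: "\<forall>\<tau>\<in>C i. 0 \<le> \<mu> \<tau> \<and> \<mu> \<tau> \<le> 1"
    and f: "f \<in> l2chains C \<mu> i"
  shows "(\<lambda>\<tau>. if \<tau> \<in> R i then f \<tau> * \<mu> \<tau> else 0) \<in> l2chains R \<nu> i"
proof -
  have "(\<lambda>\<tau>. (f \<tau>)\<^sup>2 * \<mu> \<tau>) summable_on R i"
    using f RC summable_on_subset_banach unfolding l2chains_def by blast
  moreover have "(f \<tau> * \<mu> \<tau>)\<^sup>2 \<le> (f \<tau>)\<^sup>2 * \<mu> \<tau>" if "\<tau> \<in> R i" for \<tau>
  proof -
    have "(f \<tau>)\<^sup>2 * (\<mu> \<tau> * \<mu> \<tau>) \<le> (f \<tau>)\<^sup>2 * \<mu> \<tau>"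
      using \<mu> RC that by (intro mult_left_mono mult_right_le_one_le) auto
    then show ?thesis by (simp add: power2_eq_square algebra_simps)
  qed
  ultimately have "(\<lambda>\<tau>. (f \<tau> * \<mu> \<tau>)\<^sup>2) summable_on R i"
    by (rule summable_on_comparison_test) auto
  then show ?thesis
    unfolding l2chains_def using \<nu> by (auto intro: summable_on_cong[THEN iffD1])
qed

lemma wbd_rescaled_restriction_eq_zero:
  assumes RC: "R i \<subseteq> C i" "R (i - 1) \<subseteq> C (i - 1)"
    and coface: "\<forall>\<sigma>\<in>R (i - 1). \<forall>\<tau>\<in>C i. inc \<tau> \<sigma> \<noteq> 0 \<longrightarrow> \<tau> \<in> R i"
    and \<nu>: "\<forall>\<tau>\<in>R i. \<nu> \<tau> = 1" and \<mu>: "\<forall>\<sigma>\<in>C (i - 1). \<mu> \<sigma> \<noteq> 0"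
    and cycle: "\<forall>\<sigma>. wbd C \<mu> inc i f \<sigma> = 0"
  shows "wbd R \<nu> inc i (\<lambda>\<tau>. if \<tau> \<in> R i then f \<tau> * \<mu> \<tau> else 0) \<sigma> = 0"
proof (cases "i = 0 \<or> \<sigma> \<notin> R (i - 1)")
  case True
  then show ?thesis by (simp add: wbd_def)
next
  case False
  then have \<sigma>: "i \<noteq> 0" "\<sigma> \<in> R (i - 1)" "\<sigma> \<in> C (i - 1)" using RC by auto
  have cofaces: "{\<tau>\<in>R i. inc \<tau> \<sigma> \<noteq> 0} = {\<tau>\<in>C i. inc \<tau> \<sigma> \<noteq> 0}"
    using RC coface \<sigma> by blast
  have "(\<Sum>\<tau>\<in>{\<tau>\<in>C i. inc \<tau> \<sigma> \<noteq> 0}. inc \<tau> \<sigma> * f \<tau> * \<mu> \<tau>) = 0"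
    using cycle[rule_format, of \<sigma>] \<sigma> \<mu> by (simp add: wbd_def)
  moreover have "(\<Sum>\<tau>\<in>{\<tau>\<in>R i. inc \<tau> \<sigma> \<noteq> 0}.
        inc \<tau> \<sigma> * (if \<tau> \<in> R i then f \<tau> * \<mu> \<tau> else 0) * \<nu> \<tau>)
      = (\<Sum>\<tau>\<in>{\<tau>\<in>C i. inc \<tau> \<sigma> \<noteq> 0}. inc \<tau> \<sigma> * f \<tau> * \<mu> \<tau>)"
    unfolding cofaces[symmetric] using \<nu> by (intro sum.cong) auto
  ultimately show ?thesis
    using \<sigma> by (simp add: wbd_def)
qed

lemma cox_cells_eq_empty_above_dim:
  assumes dim: "davis_dim_two G S" and i: "2 < i"
  shows "cox_cells G S i = {}"
proof (rule equals0I)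
  fix \<sigma> assume "\<sigma> \<in> cox_cells G S i"
  then obtain U where "U \<subseteq> S" "spherical G U" "card U = i"
    unfolding cox_cells_def by blast
  moreover have "\<forall>U\<subseteq>S. spherical G U \<longrightarrow> card U \<le> 2"
    using dim unfolding davis_dim_two_def by blast
  ultimately show False using i by auto
qed

lemma cox_inc_ne_zero_imp_type_subset:
  assumes "cox_inc G S \<tau> \<sigma> \<noteq> 0"
  shows "snd \<sigma> \<subseteq> snd \<tau>"
proof -
  have "\<exists>s\<in>snd \<tau>. snd \<sigma> = snd \<tau> - {s}"
  proof (rule ccontr)
    assume "\<not> (\<exists>s\<in>snd \<tau>. snd \<sigma> = snd \<tau> - {s})"
    then have "cox_inc G S \<tau> \<sigma> = 0" unfolding cox_inc_def by (simp only: simp_thms if_False)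
    with assms show False by contradiction
  qed
  then show ?thesis by blast
qed

lemma ruin_rel_cells_coface_closed:
  assumes "\<sigma> \<in> ruin_rel_cells G S T j" "\<tau> \<in> cox_cells G S i" "cox_inc G S \<tau> \<sigma> \<noteq> 0"
  shows "\<tau> \<in> ruin_rel_cells G S T i"
  using assms cox_inc_ne_zero_imp_type_subset[OF assms(3)] by (auto simp: ruin_rel_cells_def)

lemma davis_top_cycle_eq_zero_on_ruin:
  assumes cs: "coxeter_system G S" and top: "cox_cells G S (Suc d) = {}"
    and ruin: "ruin_l2H_zero G S T (\<lambda>_. 1) d"
    and q: "\<forall>s\<in>S. 0 < q s \<and> q s \<le> 1"
    and f: "f \<in> l2chains (cox_cells G S) (cell_meas G S q) d"
      "\<forall>\<sigma>. wbd (cox_cells G S) (cell_meas G S q) (cox_inc G S) d f \<sigma> = 0"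
    and \<tau>: "\<tau> \<in> ruin_rel_cells G S T d"
  shows "f \<tau> = 0"
proof -
  let ?R = "ruin_rel_cells G S T" and ?\<mu> = "cell_meas G S q" and ?\<nu> = "cell_meas G S (\<lambda>_. 1)"
  let ?h = "\<lambda>\<sigma>. if \<sigma> \<in> ?R d then f \<sigma> * ?\<mu> \<sigma> else 0"
  have RC: "\<And>i. ?R i \<subseteq> cox_cells G S i" by (auto simp: ruin_rel_cells_def)
  have \<nu>: "\<forall>\<sigma>\<in>?R i. ?\<nu> \<sigma> = 1" for i using cell_meas_one[OF cs] RC by blast
  have \<mu>: "0 < ?\<mu> \<sigma> \<and> ?\<mu> \<sigma> \<le> 1" if "\<sigma> \<in> cox_cells G S i" for \<sigma> i
    using cell_meas_bounds[OF cs that q] .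
  have "?h \<in> l2chains ?R ?\<nu> d"
    using RC \<nu> \<mu> f(1) by (intro l2chains_rescaled_restriction) (auto simp: less_imp_le)
  moreover have "\<forall>\<sigma>. wbd ?R ?\<nu> (cox_inc G S) d ?h \<sigma> = 0"
  proof (intro allI wbd_rescaled_restriction_eq_zero)
    show "\<forall>\<sigma>\<in>?R (d - 1). \<forall>\<tau>\<in>cox_cells G S d. cox_inc G S \<tau> \<sigma> \<noteq> 0 \<longrightarrow> \<tau> \<in> ?R d"
      using ruin_rel_cells_coface_closed by blast
    show "\<forall>\<sigma>\<in>cox_cells G S (d - 1). ?\<mu> \<sigma> \<noteq> 0"
      using \<mu> by (metis less_irrefl)
  qed (use RC \<nu> f(2) in auto)
  moreover have "?R (Suc d) = {}" using RC[of "Suc d"] top by blast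
  ultimately have "?h \<tau> = 0"
    using ruin \<tau> \<nu>
    by (intro red_l2_hom_vanishes_top_cycle_eq_zero[where C = ?R and \<mu> = ?\<nu>])
      (auto simp: ruin_l2H_zero_def)
  then have "f \<tau> * ?\<mu> \<tau> = 0" using \<tau> by (simp only: if_True)
  moreover have "?\<mu> \<tau> \<noteq> 0" using \<mu> RC \<tau> by (metis less_irrefl subsetD)
  ultimately show ?thesis by simp
qed

theorem corollary6p5:
  fixes G :: "('a, 'b) monoid_scheme" and S :: "'a set"
  assumes "coxeter_system G S"
    and "davis_dim_two G S"
    and "\<forall>t\<in>S. \<forall>i. i \<noteq> 1 \<longrightarrow> ruin_l2H_zero G S {t} (\<lambda>_. 1) i"
  shows "\<forall>q. multiparameter G S q \<and> (\<forall>s\<in>S. q s \<le> 1) \<longrightarrow> davis_l2H_zero G S q 2"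
proof (intro allI impI)
  fix q assume "multiparameter G S q \<and> (\<forall>s\<in>S. q s \<le> 1)"
  then have q: "\<forall>s\<in>S. 0 < q s \<and> q s \<le> 1" by (auto simp: multiparameter_def)
  have top: "cox_cells G S (Suc 2) = {}"
    using cox_cells_eq_empty_above_dim[OF assms(2)] by simp
  show "davis_l2H_zero G S q 2"
    unfolding davis_l2H_zero_def
  proof (rule red_l2_hom_vanishes_if_cycles_zero, intro ballI)
    fix f \<tau>
    assume f: "f \<in> l2chains (cox_cells G S) (cell_meas G S q) 2"
      "\<forall>\<sigma>. wbd (cox_cells G S) (cell_meas G S q) (cox_inc G S) 2 f \<sigma> = 0"
      and \<tau>: "\<tau> \<in> cox_cells G S 2"
    then obtain t where t: "t \<in> snd \<tau>" "t \<in> S"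
      unfolding cox_cells_def by (force simp: card_2_iff)
    have "ruin_l2H_zero G S {t} (\<lambda>_. 1) 2" using assms(3) t(2) by simp
    moreover have "\<tau> \<in> ruin_rel_cells G S {t} 2" using \<tau> t(1) by (simp add: ruin_rel_cells_def)
    ultimately show "f \<tau> = 0" by (rule davis_top_cycle_eq_zero_on_ruin[OF assms(1) top _ q f])
  qed
qed

end
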